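(* Let $\mathcal{D}$ be a clocked basic action theory and $\sigma$ a (ground) situation. Then the clock valuation $\nu_\sigma$ of $\sigma$ exists and is unique, i.e., for every ground situation-suppressed clock term $\omega$ there is exactly one $\tau\in\mathbb{R}$ with $\mathcal{D}\models\omega[\sigma]=\tau$.
   Context: Situation calculus setting: sorts action, situation, object and time (the real numbers with standard operations and relations); $S_0$ initial situation; $\mathit{do}(a,s)$ the successor situation. Fluents are relation or function symbols with last argument a situation and other arguments objects; there are finitely many fluents, finitely many action types and a finite set $\mathcal{O}$ of object constants (with unique names and domain closure). A formula is uniform in $s$ if it mentions no situation term other than $s$ and does not mention $\mathit{Poss}$. A basic action theory (BAT) is $\mathcal{D} = \mathcal{D}_0 \cup \mathcal{D}_{poss} \cup \mathcal{D}_{ssa} \cup \mathcal{D}_{ca} \cup \mathcal{D}_{co} \cup \Sigma$: initial description $\mathcal{D}_0$ (sentences uniform in $S_0$, complete information), precondition axioms, successor state axioms (one per fluent), domain closure and unique name axioms for actions and objects, and foundational axioms $\Sigma$. A clock comparison is a formula $f(\vec x,s)\bowtie v$ or $v\bowtie v'$ with $f$ a functional fluent, $v,v'\in\mathbb{N}$, $\bowtie\in\{<,\leq,=,\geq,>\}$. A formula is clocked if every atomic subformula mentioning a term of sort time is a clock comparison, and time-independent if it mentions no term of sort time. A BAT is clocked if there is a distinguished action type $\mathit{wait}(t)$ with $t$ of sort time (other action types have no time argument) and: (1) every functional fluent takes values of sort time; (2) $\mathcal{D}_0$ contains $f(\vec o)=0$ (at $S_0$) for every functional fluent $f$; (3)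 every functional fluent $f$ has a successor state axiom $f(\vec o,\mathit{do}(a,s))=y \equiv \exists t\,(a=\mathit{wait}(t)\wedge y=f(\vec o,s)+t) \vee (\neg\exists t\, a=\mathit{wait}(t)) \wedge (\phi_f(\vec o,a,s)\wedge y=0 \vee \neg\phi_f(\vec o,a,s)\wedge y=f(\vec o,s))$ with $\phi_f$ time-independent and uniform in $s$; (4) every relational fluent has a successor state axiom $R(\vec o,\mathit{do}(a,s))\equiv\phi_R(\vec o,a,s)$ with $\phi_R$ clocked and uniform in $s$; (5) every precondition axiom has a clocked right-hand side uniform in $s$; (6) $\mathit{Poss}(\mathit{wait}(t),s)\equiv\top$. Functional fluents are called clocks; $\mathcal{C}$ is the set of ground situation-suppressed clock terms. The clock valuation of a situation $\sigma$ is the function $\nu_\sigma:\mathcal{C}\to\mathbb{R}_{\geq0}$ with $\nu_\sigma(\omega)=\tau$ iff $\mathcal{D}\models\omega[\sigma]=\tau$. *)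

theory Defs
  imports Main "HOL.Real"
begin

text \<open>Ground actions: a non-wait action type applied to object arguments, or wait(t).
  Unique names and domain closure for actions are given by the datatype.\<close>
datatype ('a, 'o) action = Act 'a "'o list" | Wait real

text \<open>Situations: S0 and do(a,s). The foundational axioms Sigma make the situation
  domain of every model the tree of finite action sequences.\<close>
datatype ('a, 'o) sit = S0 | Do "('a, 'o) action" "('a, 'o) sit"

section \<open>Syntax of formulas uniform in s (situation argument suppressed, no Poss)\<close>

datatype 'o otm = OV nat | OC 'o

datatype ('f, 'o) ttm = TV nat | TNum real | TPlus "('f, 'o) ttm" "('f, 'o) ttm"
  | TTimes "('f, 'o) ttm" "('f, 'o) ttm" | TUminus "('f, 'o) ttm"
  | TClock 'f "'o otm list"

datatype ('a, 'f, 'o) atm = AV nat | AAct 'a "'o otm list" | AWait "('f, 'o) ttm"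

datatype ('r, 'f, 'a, 'o) fml =
    OEq "'o otm" "'o otm"
  | AEq "('a, 'f, 'o) atm" "('a, 'f, 'o) atm"
  | TEq "('f, 'o) ttm" "('f, 'o) ttm"
  | TLess "('f, 'o) ttm" "('f, 'o) ttm"
  | TLeq "('f, 'o) ttm" "('f, 'o) ttm"
  | Rel 'r "'o otm list"
  | Neg "('r, 'f, 'a, 'o) fml"
  | Conj "('r, 'f, 'a, 'o) fml" "('r, 'f, 'a, 'o) fml"
  | ExO nat "('r, 'f, 'a, 'o) fml"
  | ExA nat "('r, 'f, 'a, 'o) fml"
  | ExT nat "('r, 'f, 'a, 'o) fml"

datatype var = VO nat | VAc nat | VTi nat

fun fvo :: "'o otm \<Rightarrow> var set" where
  "fvo (OV i) = {VO i}"
| "fvo (OC c) = {}"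

fun fvt :: "('f, 'o) ttm \<Rightarrow> var set" where
  "fvt (TV i) = {VTi i}"
| "fvt (TNum r) = {}"
| "fvt (TPlus x y) = fvt x \<union> fvt y"
| "fvt (TTimes x y) = fvt x \<union> fvt y"
| "fvt (TUminus x) = fvt x"
| "fvt (TClock f xs) = (\<Union>x\<in>set xs. fvo x)"

fun fva :: "('a, 'f, 'o) atm \<Rightarrow> var set" where
  "fva (AV i) = {VAc i}"
| "fva (AAct A xs) = (\<Union>x\<in>set xs. fvo x)"
| "fva (AWait t) = fvt t"

fun fv :: "('r, 'f, 'a, 'o) fml \<Rightarrow> var set" where
  "fv (OEq x y) = fvo x \<union> fvo y"
| "fv (AEq x y) = fva x \<union> fva y"
| "fv (TEq x y) = fvt x \<union> fvt y"
| "fv (TLess x y) = fvt x \<union> fvt y"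
| "fv (TLeq x y) = fvt x \<union> fvt y"
| "fv (Rel R xs) = (\<Union>x\<in>set xs. fvo x)"
| "fv (Neg p) = fv p"
| "fv (Conj p q) = fv p \<union> fv q"
| "fv (ExO i p) = fv p - {VO i}"
| "fv (ExA i p) = fv p - {VAc i}"
| "fv (ExT i p) = fv p - {VTi i}"

section \<open>Basic action theories (the axiom schemata are fixed by the clocked format)\<close>

record ('r, 'f, 'a, 'o) bat =
  rar :: "'r \<Rightarrow> nat"
  far :: "'f \<Rightarrow> nat"     \<comment> \<open>arity (object arguments) of functional fluents (clocks)\<close>
  aar :: "'a \<Rightarrow> nat"
  D0 :: "('r, 'f, 'a, 'o) fml set"   \<comment> \<open>initial sentences, evaluated at S0\<close>
  pre :: "'a \<Rightarrow> ('r, 'f, 'a, 'o) fml"  \<comment> \<open>Poss(A(x_0..x_{n-1}),s) == pre A (object vars 0..n-1)\<close>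
  ssaR :: "'r \<Rightarrow> ('r, 'f, 'a, 'o) fml" \<comment> \<open>phi_R(x_0..x_{k-1}, a, s); a is action var 0\<close>
  phiF :: "'f \<Rightarrow> ('r, 'f, 'a, 'o) fml" \<comment> \<open>phi_f(x_0..x_{k-1}, a, s); a is action var 0\<close>

fun wf_act :: "('a \<Rightarrow> nat) \<Rightarrow> ('a, 'o) action \<Rightarrow> bool" where
  "wf_act ar (Act A os) = (length os = ar A)"
| "wf_act ar (Wait t) = True"

fun wf_sit :: "('a \<Rightarrow> nat) \<Rightarrow> ('a, 'o) sit \<Rightarrow> bool" where
  "wf_sit ar S0 = True"
| "wf_sit ar (Do a s) = (wf_act ar a \<and> wf_sit ar s)"

fun wf_t :: "('r, 'f, 'a, 'o, 'z) bat_scheme \<Rightarrow> ('f, 'o) ttm \<Rightarrow> bool" where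
  "wf_t D (TPlus x y) = (wf_t D x \<and> wf_t D y)"
| "wf_t D (TTimes x y) = (wf_t D x \<and> wf_t D y)"
| "wf_t D (TUminus x) = wf_t D x"
| "wf_t D (TClock f xs) = (length xs = far D f)"
| "wf_t D _ = True"

fun wf_a :: "('r, 'f, 'a, 'o, 'z) bat_scheme \<Rightarrow> ('a, 'f, 'o) atm \<Rightarrow> bool" where
  "wf_a D (AAct A xs) = (length xs = aar D A)"
| "wf_a D (AWait t) = wf_t D t"
| "wf_a D (AV i) = True"

fun wf_f :: "('r, 'f, 'a, 'o, 'z) bat_scheme \<Rightarrow> ('r, 'f, 'a, 'o) fml \<Rightarrow> bool" where
  "wf_f D (AEq x y) = (wf_a D x \<and> wf_a D y)"
| "wf_f D (TEq x y) = (wf_t D x \<and> wf_t D y)"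
| "wf_f D (TLess x y) = (wf_t D x \<and> wf_t D y)"
| "wf_f D (TLeq x y) = (wf_t D x \<and> wf_t D y)"
| "wf_f D (Rel R xs) = (length xs = rar D R)"
| "wf_f D (Neg p) = wf_f D p"
| "wf_f D (Conj p q) = (wf_f D p \<and> wf_f D q)"
| "wf_f D (ExO i p) = wf_f D p"
| "wf_f D (ExA i p) = wf_f D p"
| "wf_f D (ExT i p) = wf_f D p"
| "wf_f D (OEq x y) = True"

definition is_nat_const :: "('f, 'o) ttm \<Rightarrow> bool" where
  "is_nat_const t \<longleftrightarrow> (\<exists>n::nat. t = TNum (real n))"

fun is_clock_term :: "('f, 'o) ttm \<Rightarrow> bool" where
  "is_clock_term (TClock f xs) = True"
| "is_clock_term _ = False"

text \<open>Operands of a clock comparison f(x,s) \<bowtie> v or v \<bowtie> v' (the relations \<ge>, > are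
  TLeq, TLess with swapped operands, so both operand orders are admitted).\<close>
definition clock_cmp_args :: "('f, 'o) ttm \<Rightarrow> ('f, 'o) ttm \<Rightarrow> bool" where
  "clock_cmp_args x y \<longleftrightarrow>
     (is_clock_term x \<and> is_nat_const y) \<or> (is_nat_const x \<and> is_clock_term y)
     \<or> (is_nat_const x \<and> is_nat_const y)"

fun time_free_a :: "('a, 'f, 'o) atm \<Rightarrow> bool" where
  "time_free_a (AWait t) = False"
| "time_free_a _ = True"

fun clocked :: "('r, 'f, 'a, 'o) fml \<Rightarrow> bool" where
  "clocked (TEq x y) = clock_cmp_args x y"
| "clocked (TLess x y) = clock_cmp_args x y"
| "clocked (TLeq x y) = clock_cmp_args x y"
| "clocked (AEq x y) = (time_free_a x \<and> time_free_a y)"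
| "clocked (Neg p) = clocked p"
| "clocked (Conj p q) = (clocked p \<and> clocked q)"
| "clocked (ExO i p) = clocked p"
| "clocked (ExA i p) = clocked p"
| "clocked (ExT i p) = clocked p"
| "clocked (OEq x y) = True"
| "clocked (Rel R xs) = True"

fun time_indep :: "('r, 'f, 'a, 'o) fml \<Rightarrow> bool" where
  "time_indep (TEq x y) = False"
| "time_indep (TLess x y) = False"
| "time_indep (TLeq x y) = False"
| "time_indep (AEq x y) = (time_free_a x \<and> time_free_a y)"
| "time_indep (Neg p) = time_indep p"
| "time_indep (Conj p q) = (time_indep p \<and> time_indep q)"
| "time_indep (ExO i p) = time_indep p"
| "time_indep (ExA i p) = time_indep p"
| "time_indep (ExT i p) = False"
| "time_indep (OEq x y) = True"
| "time_indep (Rel R xs) = True"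

text \<open>The domains of objects (the type 'o = the constants O, by unique names and domain
  closure), actions, situations and time (the reals) are the standard ones.\<close>
record ('r, 'f, 'a, 'o) struct =
  rint :: "'r \<Rightarrow> 'o list \<Rightarrow> ('a, 'o) sit \<Rightarrow> bool"
  fint :: "'f \<Rightarrow> 'o list \<Rightarrow> ('a, 'o) sit \<Rightarrow> real"
  possI :: "('a, 'o) action \<Rightarrow> ('a, 'o) sit \<Rightarrow> bool"

fun evo :: "(nat \<Rightarrow> 'o) \<Rightarrow> 'o otm \<Rightarrow> 'o" where
  "evo eo (OV i) = eo i"
| "evo eo (OC c) = c"

fun evt :: "('r, 'f, 'a, 'o, 'z) struct_scheme \<Rightarrow> ('a, 'o) sit \<Rightarrow> (nat \<Rightarrow> 'o)
    \<Rightarrow> (nat \<Rightarrow> real) \<Rightarrow> ('f, 'o) ttm \<Rightarrow> real" where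
  "evt M s eo et (TV i) = et i"
| "evt M s eo et (TNum r) = r"
| "evt M s eo et (TPlus x y) = evt M s eo et x + evt M s eo et y"
| "evt M s eo et (TTimes x y) = evt M s eo et x * evt M s eo et y"
| "evt M s eo et (TUminus x) = - evt M s eo et x"
| "evt M s eo et (TClock f xs) = fint M f (map (evo eo) xs) s"

fun eva :: "('r, 'f, 'a, 'o, 'z) struct_scheme \<Rightarrow> ('a, 'o) sit \<Rightarrow> (nat \<Rightarrow> 'o)
    \<Rightarrow> (nat \<Rightarrow> ('a, 'o) action) \<Rightarrow> (nat \<Rightarrow> real) \<Rightarrow> ('a, 'f, 'o) atm \<Rightarrow> ('a, 'o) action" where
  "eva M s eo ea et (AV i) = ea i"
| "eva M s eo ea et (AAct A xs) = Act A (map (evo eo) xs)"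
| "eva M s eo ea et (AWait t) = Wait (evt M s eo et t)"

fun ev :: "('r, 'f, 'a, 'o, 'y) bat_scheme \<Rightarrow> ('r, 'f, 'a, 'o, 'z) struct_scheme
    \<Rightarrow> ('a, 'o) sit \<Rightarrow> (nat \<Rightarrow> 'o) \<Rightarrow> (nat \<Rightarrow> ('a, 'o) action) \<Rightarrow> (nat \<Rightarrow> real)
    \<Rightarrow> ('r, 'f, 'a, 'o) fml \<Rightarrow> bool" where
  "ev D M s eo ea et (OEq x y) = (evo eo x = evo eo y)"
| "ev D M s eo ea et (AEq x y) = (eva M s eo ea et x = eva M s eo ea et y)"
| "ev D M s eo ea et (TEq x y) = (evt M s eo et x = evt M s eo et y)"
| "ev D M s eo ea et (TLess x y) = (evt M s eo et x < evt M s eo et y)"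
| "ev D M s eo ea et (TLeq x y) = (evt M s eo et x \<le> evt M s eo et y)"
| "ev D M s eo ea et (Rel R xs) = rint M R (map (evo eo) xs) s"
| "ev D M s eo ea et (Neg p) = (\<not> ev D M s eo ea et p)"
| "ev D M s eo ea et (Conj p q) = (ev D M s eo ea et p \<and> ev D M s eo ea et q)"
| "ev D M s eo ea et (ExO i p) = (\<exists>c. ev D M s (eo(i := c)) ea et p)"
| "ev D M s eo ea et (ExA i p) = (\<exists>a. wf_act (aar D) a \<and> ev D M s eo (ea(i := a)) et p)"
| "ev D M s eo ea et (ExT i p) = (\<exists>t. ev D M s eo ea (et(i := t)) p)"

definition sat_D0 :: "('r, 'f, 'a, 'o, 'y) bat_scheme \<Rightarrow> ('r, 'f, 'a, 'o, 'z) struct_scheme \<Rightarrow> bool" where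
  "sat_D0 D M \<longleftrightarrow> (\<forall>\<phi>\<in>D0 D. \<forall>eo ea et. ev D M S0 eo ea et \<phi>)"

text \<open>M is a model of D = D0 \<union> D_poss \<union> D_ssa \<union> D_ca \<union> D_co \<union> Sigma, with the
  successor state axioms of clocks in the clocked format and Poss(wait(t),s) \<equiv> true.\<close>
definition is_model :: "('r, 'f, 'a, 'o, 'y) bat_scheme \<Rightarrow> ('r, 'f, 'a, 'o, 'z) struct_scheme \<Rightarrow> bool" where
  "is_model D M \<longleftrightarrow>
     sat_D0 D M
   \<and> (\<forall>A os s. length os = aar D A \<longrightarrow> wf_sit (aar D) s \<longrightarrow>
        (possI M (Act A os) s \<longleftrightarrow> ev D M s (\<lambda>i. os ! i) (\<lambda>_. Wait 0) (\<lambda>_. 0) (pre D A)))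
   \<and> (\<forall>t s. wf_sit (aar D) s \<longrightarrow> possI M (Wait t) s)
   \<and> (\<forall>R os a s. length os = rar D R \<longrightarrow> wf_act (aar D) a \<longrightarrow> wf_sit (aar D) s \<longrightarrow>
        (rint M R os (Do a s) \<longleftrightarrow> ev D M s (\<lambda>i. os ! i) (\<lambda>_. a) (\<lambda>_. 0) (ssaR D R)))
   \<and> (\<forall>f os a s. length os = far D f \<longrightarrow> wf_act (aar D) a \<longrightarrow> wf_sit (aar D) s \<longrightarrow>
        fint M f os (Do a s) =
          (case a of Wait t \<Rightarrow> fint M f os s + t
           | Act _ _ \<Rightarrow> (if ev D M s (\<lambda>i. os ! i) (\<lambda>_. a) (\<lambda>_. 0) (phiF D f)
                         then 0 else fint M f os s)))"

text \<open>D |= omega[sigma] = tau, for the ground clock term omega = f(os).\<close>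
definition entails_clock :: "('r, 'f, 'a, 'o) bat \<Rightarrow> ('a, 'o) sit \<Rightarrow> 'f \<Rightarrow> 'o list \<Rightarrow> real \<Rightarrow> bool" where
  "entails_clock D \<sigma> f os \<tau> \<longleftrightarrow>
     (\<forall>M :: ('r, 'f, 'a, 'o) struct. is_model D M \<longrightarrow> fint M f os \<sigma> = \<tau>)"

definition clock_terms :: "('r, 'f, 'a, 'o) bat \<Rightarrow> ('f \<times> 'o list) set" where
  "clock_terms D = {(f, os). length os = far D f}"

definition D0_complete :: "('r, 'f, 'a, 'o) bat \<Rightarrow> bool" where
  "D0_complete D \<longleftrightarrow>
     (\<exists>M :: ('r, 'f, 'a, 'o) struct. sat_D0 D M)
   \<and> (\<forall>\<phi>. wf_f D \<phi> \<longrightarrow> fv \<phi> = {} \<longrightarrow>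
        (\<forall>M :: ('r, 'f, 'a, 'o) struct. sat_D0 D M \<longrightarrow> ev D M S0 (\<lambda>_. undefined) (\<lambda>_. Wait 0) (\<lambda>_. 0) \<phi>)
      \<or> (\<forall>M :: ('r, 'f, 'a, 'o) struct. sat_D0 D M \<longrightarrow> \<not> ev D M S0 (\<lambda>_. undefined) (\<lambda>_. Wait 0) (\<lambda>_. 0) \<phi>))"

definition clocked_bat :: "('r, 'f, 'a, 'o) bat \<Rightarrow> bool" where
  "clocked_bat D \<longleftrightarrow>
     (\<forall>\<phi>\<in>D0 D. wf_f D \<phi> \<and> fv \<phi> = {})
   \<and> D0_complete D
   \<and> (\<forall>f os. length os = far D f \<longrightarrow> TEq (TClock f (map OC os)) (TNum 0) \<in> D0 D)
   \<and> (\<forall>f. wf_f D (phiF D f) \<and> fv (phiF D f) \<subseteq> {VO i | i. i < far D f} \<union> {VAc 0}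
          \<and> time_indep (phiF D f))
   \<and> (\<forall>R. wf_f D (ssaR D R) \<and> fv (ssaR D R) \<subseteq> {VO i | i. i < rar D R} \<union> {VAc 0}
          \<and> clocked (ssaR D R))
   \<and> (\<forall>A. wf_f D (pre D A) \<and> fv (pre D A) \<subseteq> {VO i | i. i < aar D A}
          \<and> clocked (pre D A))"

end

theory Submission
  imports Defs
begin

(* Completeness of D0 fixes the values of all fluents at S0, and the successor state axioms
   compute the fluents at do(a, s) from their values at s; by induction on situations all
   models of D agree on every fluent, in particular on every clock. A model exists because
   the same recursion, started from any model of D0, defines one. None of this uses the
   clocked format beyond well-formedness of the axioms and completeness of D0. *)

definition agree_at :: "('r, 'f, 'a, 'o, 'y) bat_scheme \<Rightarrow> ('r, 'f, 'a, 'o, 'z) struct_scheme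
    \<Rightarrow> ('r, 'f, 'a, 'o, 'w) struct_scheme \<Rightarrow> ('a, 'o) sit \<Rightarrow> bool" where
  "agree_at D M1 M2 s \<longleftrightarrow>
     (\<forall>R os. length os = rar D R \<longrightarrow> rint M1 R os s = rint M2 R os s)
   \<and> (\<forall>f os. length os = far D f \<longrightarrow> fint M1 f os s = fint M2 f os s)"

definition wf_bat :: "('r, 'f, 'a, 'o, 'y) bat_scheme \<Rightarrow> bool" where
  "wf_bat D \<longleftrightarrow> (\<forall>\<phi>\<in>D0 D. wf_f D \<phi>) \<and> (\<forall>A. wf_f D (pre D A))
     \<and> (\<forall>R. wf_f D (ssaR D R)) \<and> (\<forall>f. wf_f D (phiF D f))"

lemma clocked_bat_imp_wf_bat: "clocked_bat D \<Longrightarrow> wf_bat D"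
  by (simp add: clocked_bat_def wf_bat_def)

lemma clocked_bat_imp_D0_complete: "clocked_bat D \<Longrightarrow> D0_complete D"
  by (simp add: clocked_bat_def)

lemma evt_clock_cong:
  assumes "wf_t D t" and "\<forall>f os. length os = far D f \<longrightarrow> fint M1 f os s = fint M2 f os s"
  shows "evt M1 s eo et t = evt M2 s eo et t"
  using assms by (induction t) auto

lemma eva_clock_cong:
  assumes "wf_a D x" and "\<forall>f os. length os = far D f \<longrightarrow> fint M1 f os s = fint M2 f os s"
  shows "eva M1 s eo ea et x = eva M2 s eo ea et x"
  using assms by (induction x) (auto intro: evt_clock_cong)

lemma ev_agree_at_cong:
  assumes "wf_f D \<phi>" and "agree_at D M1 M2 s"
  shows "ev D M1 s eo ea et \<phi> = ev D M2 s eo ea et \<phi>"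
  using assms
proof (induction \<phi> arbitrary: eo ea et)
  case (AEq x y)
  then show ?case by (simp add: agree_at_def eva_clock_cong[of D _ M1 s M2])
next
  case (TEq x y)
  then show ?case by (simp add: agree_at_def evt_clock_cong[of D _ M1 s M2])
next
  case (TLess x y)
  then show ?case by (simp add: agree_at_def evt_clock_cong[of D _ M1 s M2])
next
  case (TLeq x y)
  then show ?case by (simp add: agree_at_def evt_clock_cong[of D _ M1 s M2])
qed (auto simp: agree_at_def)

lemma D0_complete_decides:
  fixes D :: "('r, 'f, 'a, 'o) bat" and M1 M2 :: "('r, 'f, 'a, 'o) struct"
  assumes "D0_complete D" and "sat_D0 D M1" and "sat_D0 D M2"
    and "wf_f D \<phi>" and "fv \<phi> = {}"
  shows "ev D M1 S0 (\<lambda>_. undefined) (\<lambda>_. Wait 0) (\<lambda>_. 0) \<phi>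
     \<longleftrightarrow> ev D M2 S0 (\<lambda>_. undefined) (\<lambda>_. Wait 0) (\<lambda>_. 0) \<phi>"
  using assms unfolding D0_complete_def by blast

lemma D0_complete_agree_at_S0:
  fixes D :: "('r, 'f, 'a, 'o) bat" and M1 M2 :: "('r, 'f, 'a, 'o) struct"
  assumes complete: "D0_complete D" and M1: "sat_D0 D M1" and M2: "sat_D0 D M2"
  shows "agree_at D M1 M2 S0"
  unfolding agree_at_def
proof (intro conjI allI impI)
  fix R and os :: "'o list" assume "length os = rar D R"
  then show "rint M1 R os S0 = rint M2 R os S0"
    using D0_complete_decides[OF complete M1 M2, of "Rel R (map OC os)"] by (simp add: comp_def)
next
  fix f and os :: "'o list" assume "length os = far D f"
  \<comment> \<open>The sentence f(os) = v, with v the value in M1, holds in M1 and hence in M2.\<close>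
  then show "fint M1 f os S0 = fint M2 f os S0"
    using D0_complete_decides[OF complete M1 M2,
        of "TEq (TClock f (map OC os)) (TNum (fint M1 f os S0))"]
    by (simp add: comp_def)
qed

lemma models_agree_at_Do:
  fixes D :: "('r, 'f, 'a, 'o) bat" and M1 M2 :: "('r, 'f, 'a, 'o) struct"
  assumes wf: "wf_bat D" and M1: "is_model D M1" and M2: "is_model D M2"
    and a: "wf_act (aar D) a" and s: "wf_sit (aar D) s"
    and agree: "agree_at D M1 M2 s"
  shows "agree_at D M1 M2 (Do a s)"
  unfolding agree_at_def
proof (intro conjI allI impI)
  fix R and os :: "'o list" assume "length os = rar D R"
  moreover have "ev D M1 s eo ea et (ssaR D R) = ev D M2 s eo ea et (ssaR D R)" for eo ea et
    using wf agree by (simp add: wf_bat_def ev_agree_at_cong)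
  ultimately show "rint M1 R os (Do a s) = rint M2 R os (Do a s)"
    using M1 M2 a s unfolding is_model_def by metis
next
  fix f and os :: "'o list" assume len: "length os = far D f"
  have phi: "ev D M1 s eo ea et (phiF D f) = ev D M2 s eo ea et (phiF D f)" for eo ea et
    using wf agree by (simp add: wf_bat_def ev_agree_at_cong)
  have clock: "fint M1 f os s = fint M2 f os s"
    using agree len by (simp add: agree_at_def)
  show "fint M1 f os (Do a s) = fint M2 f os (Do a s)"
    using M1 M2 a s len phi clock unfolding is_model_def by (simp split: action.split)
qed

lemma models_agree_at:
  fixes D :: "('r, 'f, 'a, 'o) bat" and M1 M2 :: "('r, 'f, 'a, 'o) struct"
  assumes "wf_bat D" and "D0_complete D" and M1: "is_model D M1" and M2: "is_model D M2"
  shows "wf_sit (aar D) s \<Longrightarrow> agree_at D M1 M2 s"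
proof (induction s)
  case S0
  show ?case
    using M1 M2 D0_complete_agree_at_S0[OF \<open>D0_complete D\<close>] by (simp add: is_model_def)
next
  case (Do a s)
  then show ?case using models_agree_at_Do[OF \<open>wf_bat D\<close> M1 M2] by simp
qed

text \<open>The fluent values at \<open>s\<close> of the progressed model are kept as a structure
  that ignores its situation argument, so that the axioms can be evaluated on them.\<close>

primrec snapshot :: "('r, 'f, 'a, 'o) bat \<Rightarrow> ('r, 'f, 'a, 'o) struct \<Rightarrow> ('a, 'o) sit
    \<Rightarrow> ('r, 'f, 'a, 'o) struct" where
  "snapshot D M0 S0 =
     \<lparr>rint = (\<lambda>R os _. rint M0 R os S0), fint = (\<lambda>f os _. fint M0 f os S0),
      possI = (\<lambda>_ _. True)\<rparr>"
| "snapshot D M0 (Do a s) =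
     (let N = snapshot D M0 s in
      \<lparr>rint = (\<lambda>R os _. ev D N s (\<lambda>i. os ! i) (\<lambda>_. a) (\<lambda>_. 0) (ssaR D R)),
       fint = (\<lambda>f os _. case a of
           Wait t \<Rightarrow> fint N f os s + t
         | Act _ _ \<Rightarrow> (if ev D N s (\<lambda>i. os ! i) (\<lambda>_. a) (\<lambda>_. 0) (phiF D f)
                       then 0 else fint N f os s)),
       possI = (\<lambda>_ _. True)\<rparr>)"

definition progression :: "('r, 'f, 'a, 'o) bat \<Rightarrow> ('r, 'f, 'a, 'o) struct
    \<Rightarrow> ('r, 'f, 'a, 'o) struct" where
  "progression D M0 =
     \<lparr>rint = (\<lambda>R os s. rint (snapshot D M0 s) R os s),
      fint = (\<lambda>f os s. fint (snapshot D M0 s) f os s),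
      possI = (\<lambda>a s. case a of
          Wait _ \<Rightarrow> True
        | Act A os \<Rightarrow> ev D (snapshot D M0 s) s (\<lambda>i. os ! i) (\<lambda>_. Wait 0) (\<lambda>_. 0) (pre D A))\<rparr>"

lemma agree_at_snapshot_progression: "agree_at D (snapshot D M0 s) (progression D M0) s"
  by (simp add: agree_at_def progression_def)

lemma agree_at_initial_progression: "agree_at D M0 (progression D M0) S0"
  by (simp add: agree_at_def progression_def)

lemma is_model_progression:
  assumes wf: "wf_bat D" and M0: "sat_D0 D M0"
  shows "is_model D (progression D M0)"
proof -
  let ?M = "progression D M0"
  have ev_snapshot: "ev D (snapshot D M0 s) s eo ea et \<phi> = ev D ?M s eo ea et \<phi>"
    if "wf_f D \<phi>" for \<phi> s eo ea et
    using that agree_at_snapshot_progression by (rule ev_agree_at_cong)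
  have "sat_D0 D ?M"
    unfolding sat_D0_def
  proof (intro ballI allI)
    fix \<phi> eo ea et assume "\<phi> \<in> D0 D"
    then have "wf_f D \<phi>" and "ev D M0 S0 eo ea et \<phi>"
      using wf M0 by (auto simp: wf_bat_def sat_D0_def)
    then show "ev D ?M S0 eo ea et \<phi>"
      using ev_agree_at_cong[OF _ agree_at_initial_progression] by blast
  qed
  moreover have "possI ?M (Act A os) s = ev D ?M s (\<lambda>i. os ! i) (\<lambda>_. Wait 0) (\<lambda>_. 0) (pre D A)"
    for A os s
  proof -
    have "possI ?M (Act A os) s
        = ev D (snapshot D M0 s) s (\<lambda>i. os ! i) (\<lambda>_. Wait 0) (\<lambda>_. 0) (pre D A)"
      by (simp add: progression_def)
    then show ?thesis
      using wf ev_snapshot by (simp add: wf_bat_def)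
  qed
  moreover have "rint ?M R os (Do a s) = ev D ?M s (\<lambda>i. os ! i) (\<lambda>_. a) (\<lambda>_. 0) (ssaR D R)"
    for R os a s
  proof -
    have "rint ?M R os (Do a s)
        = ev D (snapshot D M0 s) s (\<lambda>i. os ! i) (\<lambda>_. a) (\<lambda>_. 0) (ssaR D R)"
      by (simp add: progression_def Let_def)
    then show ?thesis
      using wf ev_snapshot by (simp add: wf_bat_def)
  qed
  moreover have "fint ?M f os (Do a s) =
      (case a of Wait t \<Rightarrow> fint ?M f os s + t
       | Act _ _ \<Rightarrow> (if ev D ?M s (\<lambda>i. os ! i) (\<lambda>_. a) (\<lambda>_. 0) (phiF D f)
                     then 0 else fint ?M f os s))" for f os a s
  proof -
    have "fint ?M f os (Do a s) =
      (case a of Wait t \<Rightarrow> fint ?M f os s + t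
       | Act _ _ \<Rightarrow> (if ev D (snapshot D M0 s) s (\<lambda>i. os ! i) (\<lambda>_. a) (\<lambda>_. 0) (phiF D f)
                     then 0 else fint ?M f os s))"
      by (cases a) (simp_all add: progression_def Let_def)
    then show ?thesis
      using wf ev_snapshot by (simp add: wf_bat_def)
  qed
  moreover have "possI ?M (Wait t) s" for t s
    by (simp add: progression_def)
  ultimately show ?thesis
    unfolding is_model_def by blast
qed

lemma D0_complete_ex_model:
  fixes D :: "('r, 'f, 'a, 'o) bat"
  assumes "wf_bat D" and "D0_complete D"
  shows "\<exists>M :: ('r, 'f, 'a, 'o) struct. is_model D M"
  using assms is_model_progression unfolding D0_complete_def by blast

theorem lemma1:
  fixes D :: "('r::finite, 'f::finite, 'a::finite, 'o::finite) bat"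
    and \<sigma> :: "('a, 'o) sit"
  assumes "clocked_bat D"
    and "wf_sit (aar D) \<sigma>"
  shows "\<forall>(f, os) \<in> clock_terms D. \<exists>!\<tau>::real. entails_clock D \<sigma> f os \<tau>"
proof clarify
  fix f os assume "(f, os) \<in> clock_terms D"
  then have len: "length os = far D f" by (simp add: clock_terms_def)
  have wf: "wf_bat D" and complete: "D0_complete D"
    using assms(1) by (simp_all add: clocked_bat_imp_wf_bat clocked_bat_imp_D0_complete)
  obtain M :: "('r, 'f, 'a, 'o) struct" where M: "is_model D M"
    using D0_complete_ex_model[OF wf complete] by blast
  have "fint M' f os \<sigma> = fint M f os \<sigma>" if "is_model D M'" for M' :: "('r, 'f, 'a, 'o) struct"
    using models_agree_at[OF wf complete that M assms(2)] len by (simp add: agree_at_def)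
  then have "entails_clock D \<sigma> f os (fint M f os \<sigma>)"
    by (simp add: entails_clock_def)
  moreover have "\<tau> = fint M f os \<sigma>" if "entails_clock D \<sigma> f os \<tau>" for \<tau>
    using that M by (simp add: entails_clock_def)
  ultimately show "\<exists>!\<tau>::real. entails_clock D \<sigma> f os \<tau>" by blast
qed

end
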